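(* A real symmetric matrix has symmetric tropical rank one if and only if it has symmetric Kapranov rank one. Equivalently, the $2\times 2$ minors of an $n\times n$ symmetric matrix of indeterminates form a tropical basis.
   Context: Let $\tilde K$ be the field of Hahn series $\sum_{\alpha\in A}c_\alpha t^\alpha$ ($A\subset\mathbb R$ well-ordered, $c_\alpha\in\mathbb C$); for nonzero $a\in\tilde K$, $\deg(a)$ is the smallest exponent with nonzero coefficient. A symmetric lift of a real symmetric $n\times n$ matrix $A$ is a symmetric matrix $\tilde A$ over $\tilde K$ with all entries nonzero and $\deg(\tilde a_{i,j})=A_{i,j}$; the symmetric Kapranov rank of $A$ is the minimum rank of a symmetric lift. For an $r\times r$ submatrix of $A$ with row index set $I$ and column index set $J$, each bijection $\rho:I\to J$ gives a monomial $\prod_{i\in I}X_{i,\rho(i)}$ in commuting variables subject to $X_{i,j}=X_{j,i}$, with value $\sum_{i\in I}A_{i,\rho(i)}$; the submatrix is symmetrically tropically singular if the minimum value is attained by at least two distinct monomials. The symmetric tropical rank of $A$ is the largest $r$ such that $A$ has an $r\times r$ submatrix that is not symmetrically tropically singular. The $r\times r$ minors form a tropical basis if for every real symmetric $n\times n$ $A$: all $r\times r$ submatrices are symmetrically tropically singular iff $A$ has a symmetric lift of rank $\le r-1$. *)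

theory Defs
  imports "HOL-Analysis.Analysis" "HOL-Library.Multiset"
begin

text \<open>A Hahn series sum c_a t^a is represented by its coefficient function
  real => complex; it must have well-ordered support.\<close>

definition hsupp :: "(real \<Rightarrow> complex) \<Rightarrow> real set" where
  "hsupp f = {x. f x \<noteq> 0}"

definition hahn :: "(real \<Rightarrow> complex) \<Rightarrow> bool" where
  "hahn f \<longleftrightarrow> (\<forall>S. S \<subseteq> hsupp f \<longrightarrow> S \<noteq> {} \<longrightarrow> (\<exists>m\<in>S. \<forall>x\<in>S. m \<le> x))"

text \<open>Multiplication (Cauchy product); the index set is finite for Hahn series.\<close>
definition hmul :: "(real \<Rightarrow> complex) \<Rightarrow> (real \<Rightarrow> complex) \<Rightarrow> (real \<Rightarrow> complex)" where
  "hmul f g = (\<lambda>c. \<Sum>a\<in>{a. f a \<noteq> 0 \<and> g (c - a) \<noteq> 0}. f a * g (c - a))"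

text \<open>Degree: smallest exponent with nonzero coefficient (meaningful for nonzero series).\<close>
definition hdeg :: "(real \<Rightarrow> complex) \<Rightarrow> real" where
  "hdeg f = (LEAST x. f x \<noteq> 0)"

text \<open>Matrices are functions nat => nat => entry, only indices < n matter.
  rank M <= r iff M = U V with U an n x r and V an r x n matrix over the field.\<close>
definition hahn_rank_le :: "nat \<Rightarrow> (nat \<Rightarrow> nat \<Rightarrow> real \<Rightarrow> complex) \<Rightarrow> nat \<Rightarrow> bool" where
  "hahn_rank_le n M r \<longleftrightarrow>
     (\<exists>U V. (\<forall>i k. hahn (U i k)) \<and> (\<forall>k j. hahn (V k j)) \<and>
        (\<forall>i<n. \<forall>j<n. M i j = (\<lambda>c. \<Sum>k<r. hmul (U i k) (V k j) c)))"

definition hahn_rank :: "nat \<Rightarrow> (nat \<Rightarrow> nat \<Rightarrow> real \<Rightarrow> complex) \<Rightarrow> nat" where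
  "hahn_rank n M = (LEAST r. hahn_rank_le n M r)"

definition sym_lift :: "nat \<Rightarrow> (nat \<Rightarrow> nat \<Rightarrow> real) \<Rightarrow> (nat \<Rightarrow> nat \<Rightarrow> real \<Rightarrow> complex) \<Rightarrow> bool" where
  "sym_lift n A L \<longleftrightarrow>
     (\<forall>i<n. \<forall>j<n. hahn (L i j) \<and> L i j \<noteq> (\<lambda>_. 0) \<and> L i j = L j i \<and> hdeg (L i j) = A i j)"

definition sym_kapranov_rank :: "nat \<Rightarrow> (nat \<Rightarrow> nat \<Rightarrow> real) \<Rightarrow> nat" where
  "sym_kapranov_rank n A = (LEAST r. \<exists>L. sym_lift n A L \<and> hahn_rank n L = r)"

text \<open>The monomial prod_{i in I} X_{i, rho i} with X_{i,j} = X_{j,i}, as a multiset of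
  unordered index pairs (stored as (min, max)).\<close>
definition sym_monomial :: "nat set \<Rightarrow> (nat \<Rightarrow> nat) \<Rightarrow> (nat \<times> nat) multiset" where
  "sym_monomial I \<rho> = image_mset (\<lambda>i. (min i (\<rho> i), max i (\<rho> i))) (mset_set I)"

definition trop_value :: "(nat \<Rightarrow> nat \<Rightarrow> real) \<Rightarrow> nat set \<Rightarrow> (nat \<Rightarrow> nat) \<Rightarrow> real" where
  "trop_value A I \<rho> = (\<Sum>i\<in>I. A i (\<rho> i))"

definition sym_trop_singular :: "(nat \<Rightarrow> nat \<Rightarrow> real) \<Rightarrow> nat set \<Rightarrow> nat set \<Rightarrow> bool" where
  "sym_trop_singular A I J \<longleftrightarrow>
     (\<exists>\<rho>1 \<rho>2. bij_betw \<rho>1 I J \<and> bij_betw \<rho>2 I J \<and>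
        sym_monomial I \<rho>1 \<noteq> sym_monomial I \<rho>2 \<and>
        trop_value A I \<rho>1 = trop_value A I \<rho>2 \<and>
        (\<forall>\<rho>. bij_betw \<rho> I J \<longrightarrow> trop_value A I \<rho>1 \<le> trop_value A I \<rho>))"

definition sym_trop_rank :: "nat \<Rightarrow> (nat \<Rightarrow> nat \<Rightarrow> real) \<Rightarrow> nat" where
  "sym_trop_rank n A = (GREATEST r. \<exists>I J. I \<subseteq> {..<n} \<and> J \<subseteq> {..<n} \<and>
      card I = r \<and> card J = r \<and> \<not> sym_trop_singular A I J)"

end

theory Submission
  imports Defs
begin

text \<open>Both conditions say that \<open>A\<close> is a tropical symmetric square: \<open>A i j = x i + x j\<close>
  for some vector \<open>x\<close>. For such \<open>A\<close>, the matrix with entries \<open>t\<^bsup>x i\<^esup> t\<^bsup>x j\<^esup>\<close> is a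
  symmetric lift of rank one, and every square submatrix of size at least two is symmetrically
  tropically singular: all bijections have the same value, while composing one with a
  transposition changes its monomial. Conversely, a principal \<open>2 \<times> 2\<close> submatrix on \<open>{i, j}\<close>
  has only the monomials \<open>X\<^sub>i\<^sub>i X\<^sub>j\<^sub>j\<close> and \<open>X\<^sub>i\<^sub>j\<^sup>2\<close>, so its singularity forces
  \<open>2 A i j = A i i + A j j\<close>; and a rank one lift \<open>u v\<^sup>T\<close> has degrees \<open>deg u\<^sub>i + deg v\<^sub>j\<close>,
  which become of the required form after averaging with the transpose. Both ranks are \<open>0\<close>
  exactly for the empty matrix and at least \<open>2\<close> exactly when the form fails.\<close>

section \<open>Hahn series\<close>

definition hahn_monom :: "real \<Rightarrow> real \<Rightarrow> complex" where
  "hahn_monom a = (\<lambda>x. if x = a then 1 else 0)"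

lemma hahn_hahn_monom: "hahn (hahn_monom a)"
  unfolding hahn_def hsupp_def hahn_monom_def by (auto split: if_splits)

lemma hahn_monom_nonzero: "hahn_monom a \<noteq> (\<lambda>_. 0)"
  unfolding hahn_monom_def by (metis one_neq_zero)

lemma hdeg_hahn_monom: "hdeg (hahn_monom a) = a"
  unfolding hdeg_def hahn_monom_def by (rule Least_equality) (auto split: if_splits)

lemma hmul_hahn_monom: "hmul (hahn_monom a) (hahn_monom b) = hahn_monom (a + b)"
proof
  fix c
  have "{x. hahn_monom a x \<noteq> 0 \<and> hahn_monom b (c - x) \<noteq> 0} = (if c = a + b then {a} else {})"
    by (auto simp: hahn_monom_def)
  then show "hmul (hahn_monom a) (hahn_monom b) c = hahn_monom (a + b) c"
    unfolding hmul_def by (auto simp: hahn_monom_def)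
qed

lemma hmul_hahn_monom_0_right: "hmul f (hahn_monom 0) = f"
proof
  fix c
  have "{a. f a \<noteq> 0 \<and> hahn_monom 0 (c - a) \<noteq> 0} = (if f c \<noteq> 0 then {c} else {})"
    by (auto simp: hahn_monom_def)
  then show "hmul f (hahn_monom 0) c = f c"
    unfolding hmul_def by (auto simp: hahn_monom_def)
qed

lemma hahn_zero: "hahn (\<lambda>_. 0)"
  unfolding hahn_def hsupp_def by auto

lemma hmul_zero_left: "hmul (\<lambda>_. 0) f = (\<lambda>_. 0)"
  unfolding hmul_def by auto

lemma hmul_zero_right: "hmul f (\<lambda>_. 0) = (\<lambda>_. 0)"
  unfolding hmul_def by auto

lemma hdeg_least:
  assumes "hahn f" "f \<noteq> (\<lambda>_. 0)"
  shows "f (hdeg f) \<noteq> 0" and "f x \<noteq> 0 \<Longrightarrow> hdeg f \<le> x"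
proof -
  have "hsupp f \<noteq> {}"
    using assms(2) unfolding hsupp_def by auto
  then obtain m where m: "m \<in> hsupp f" "\<forall>x\<in>hsupp f. m \<le> x"
    using assms(1) unfolding hahn_def by blast
  then have "hdeg f = m"
    unfolding hdeg_def by (intro Least_equality) (auto simp: hsupp_def)
  with m show "f (hdeg f) \<noteq> 0" and "f x \<noteq> 0 \<Longrightarrow> hdeg f \<le> x"
    by (auto simp: hsupp_def)
qed

text \<open>The product of the lowest terms cannot cancel, since every other pair of terms
  contributes only to strictly larger exponents.\<close>
lemma hdeg_hmul:
  assumes "hahn f" "hahn g" "f \<noteq> (\<lambda>_. 0)" "g \<noteq> (\<lambda>_. 0)"
  shows "hdeg (hmul f g) = hdeg f + hdeg g"
proof -
  note f = hdeg_least[OF assms(1,3)] and g = hdeg_least[OF assms(2,4)]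
  have lowest: "{a. f a \<noteq> 0 \<and> g (hdeg f + hdeg g - a) \<noteq> 0} = {hdeg f}"
  proof safe
    fix a assume "f a \<noteq> 0" "g (hdeg f + hdeg g - a) \<noteq> 0"
    then have "hdeg f \<le> a" "hdeg g \<le> hdeg f + hdeg g - a" using f g by auto
    then show "a = hdeg f" by linarith
  qed (use f g in auto)
  have above: "hdeg f + hdeg g \<le> c" if "hmul f g c \<noteq> 0" for c
  proof -
    have "{a. f a \<noteq> 0 \<and> g (c - a) \<noteq> 0} \<noteq> {}"
      using that unfolding hmul_def by (metis sum.empty)
    then obtain a where "f a \<noteq> 0" "g (c - a) \<noteq> 0" by blast
    then have "hdeg f \<le> a" "hdeg g \<le> c - a" using f g by auto
    then show ?thesis by linarith
  qed
  show ?thesis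
    unfolding hdeg_def[of "hmul f g"]
  proof (rule Least_equality)
    show "hmul f g (hdeg f + hdeg g) \<noteq> 0"
      unfolding hmul_def lowest using f g by simp
  qed (use above in auto)
qed

section \<open>Rank over the Hahn field and symmetric Kapranov rank\<close>

lemma hahn_rank_le_0_iff: "hahn_rank_le n L 0 \<longleftrightarrow> (\<forall>i<n. \<forall>j<n. L i j = (\<lambda>_. 0))"
  unfolding hahn_rank_le_def using hahn_zero by auto

lemma hahn_rank_le_mono:
  assumes "hahn_rank_le n L r" "r \<le> s"
  shows "hahn_rank_le n L s"
proof -
  obtain U V where U: "\<forall>i k. hahn (U i k)" and V: "\<forall>k j. hahn (V k j)"
    and L: "\<forall>i<n. \<forall>j<n. L i j = (\<lambda>c. \<Sum>k<r. hmul (U i k) (V k j) c)"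
    using assms(1) unfolding hahn_rank_le_def by blast
  define U' where "U' i k = (if k < r then U i k else (\<lambda>_. 0))" for i k
  have "(\<Sum>k<s. hmul (U' i k) (V k j) c) = (\<Sum>k<r. hmul (U i k) (V k j) c)" for i j c
  proof -
    have "(\<Sum>k<s. hmul (U' i k) (V k j) c) = (\<Sum>k<r. hmul (U' i k) (V k j) c)"
      using assms(2) by (intro sum.mono_neutral_right) (auto simp: U'_def hmul_zero_left)
    then show ?thesis by (simp add: U'_def)
  qed
  moreover have "\<forall>i k. hahn (U' i k)" using U hahn_zero by (simp add: U'_def)
  ultimately show ?thesis
    unfolding hahn_rank_le_def using V L by (intro exI[of _ U'] exI[of _ V]) auto
qed

text \<open>Witness: \<open>L\<close> times the identity matrix.\<close>
lemma hahn_rank_le_dim: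
  assumes "\<forall>i<n. \<forall>j<n. hahn (L i j)"
  shows "hahn_rank_le n L n"
proof -
  define U where "U i k = (if i < n \<and> k < n then L i k else (\<lambda>_. 0))" for i k
  define V :: "nat \<Rightarrow> nat \<Rightarrow> real \<Rightarrow> complex"
    where "V k j = (if k = j then hahn_monom 0 else (\<lambda>_. 0))" for k j
  have "L i j = (\<lambda>c. \<Sum>k<n. hmul (U i k) (V k j) c)" if "i < n" "j < n" for i j
  proof
    fix c
    have "hmul (U i k) (V k j) c = (if k = j then L i j c else 0)" if "k < n" for k
      using \<open>i < n\<close> that by (simp add: U_def V_def hmul_hahn_monom_0_right hmul_zero_right)
    then show "L i j c = (\<Sum>k<n. hmul (U i k) (V k j) c)"
      using \<open>j < n\<close> by simp
  qed
  moreover have "\<forall>i k. hahn (U i k)" "\<forall>k j. hahn (V k j)"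
    using assms by (auto simp: U_def V_def hahn_zero hahn_hahn_monom)
  ultimately show ?thesis
    unfolding hahn_rank_le_def by blast
qed

lemma hahn_rank_le_hahn_rank:
  assumes "\<forall>i<n. \<forall>j<n. hahn (L i j)"
  shows "hahn_rank_le n L (hahn_rank n L)"
  unfolding hahn_rank_def using hahn_rank_le_dim[OF assms] by (rule LeastI)

lemma hahn_rank_le_1_hdeg_additive:
  assumes "hahn_rank_le n L 1" and nonzero: "\<forall>i<n. \<forall>j<n. L i j \<noteq> (\<lambda>_. 0)"
  shows "\<exists>p q. \<forall>i<n. \<forall>j<n. hdeg (L i j) = p i + q j"
proof -
  obtain U V :: "nat \<Rightarrow> nat \<Rightarrow> real \<Rightarrow> complex"
    where hahn_U: "\<forall>i k. hahn (U i k)" and hahn_V: "\<forall>k j. hahn (V k j)"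
      and UV: "\<forall>i<n. \<forall>j<n. L i j = (\<lambda>c. \<Sum>k<1. hmul (U i k) (V k j) c)"
    using assms(1) unfolding hahn_rank_le_def by blast
  have L: "L i j = hmul (U i 0) (V 0 j)" if "i < n" "j < n" for i j
    using UV that by simp
  have U_nonzero: "U i 0 \<noteq> (\<lambda>_. 0)" if "i < n" for i
    using L[OF that that] nonzero that by (auto simp: hmul_zero_left)
  have V_nonzero: "V 0 j \<noteq> (\<lambda>_. 0)" if "j < n" for j
    using L[OF that that] nonzero that by (auto simp: hmul_zero_right)
  have "hdeg (L i j) = hdeg (U i 0) + hdeg (V 0 j)" if "i < n" "j < n" for i j
    unfolding L[OF that]
    by (rule hdeg_hmul) (use hahn_U hahn_V U_nonzero V_nonzero that in auto)
  then show ?thesis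
    by (intro exI[of _ "\<lambda>i. hdeg (U i 0)"] exI[of _ "\<lambda>j. hdeg (V 0 j)"]) simp
qed

lemma sym_lift_hahn_monom:
  assumes "\<forall>i<n. \<forall>j<n. A i j = A j i"
  shows "sym_lift n A (\<lambda>i j. hahn_monom (A i j))"
  using assms by (auto simp: sym_lift_def hahn_hahn_monom hahn_monom_nonzero hdeg_hahn_monom)

lemma sym_kapranov_rank_le_iff:
  assumes "\<forall>i<n. \<forall>j<n. A i j = A j i"
  shows "sym_kapranov_rank n A \<le> r \<longleftrightarrow> (\<exists>L. sym_lift n A L \<and> hahn_rank_le n L r)"
proof
  have "\<exists>L. sym_lift n A L \<and> hahn_rank n L = sym_kapranov_rank n A"
    unfolding sym_kapranov_rank_def
    by (rule LeastI_ex) (use sym_lift_hahn_monom[OF assms] in blast)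
  then obtain L where L: "sym_lift n A L" "hahn_rank n L = sym_kapranov_rank n A"
    by blast
  then have "hahn_rank_le n L (sym_kapranov_rank n A)"
    using hahn_rank_le_hahn_rank[of n L] by (simp add: sym_lift_def)
  moreover assume "sym_kapranov_rank n A \<le> r"
  ultimately have "hahn_rank_le n L r"
    by (rule hahn_rank_le_mono)
  with L(1) show "\<exists>L. sym_lift n A L \<and> hahn_rank_le n L r"
    by blast
next
  assume "\<exists>L. sym_lift n A L \<and> hahn_rank_le n L r"
  then obtain L where L: "sym_lift n A L" "hahn_rank_le n L r"
    by blast
  have "sym_kapranov_rank n A \<le> hahn_rank n L"
    unfolding sym_kapranov_rank_def by (rule Least_le) (use L(1) in blast)
  also have "hahn_rank n L \<le> r"
    unfolding hahn_rank_def using L(2) by (rule Least_le)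
  finally show "sym_kapranov_rank n A \<le> r" .
qed

lemma sym_kapranov_rank_eq_0_iff:
  assumes "\<forall>i<n. \<forall>j<n. A i j = A j i"
  shows "sym_kapranov_rank n A = 0 \<longleftrightarrow> n = 0"
proof -
  have "\<not> (\<forall>i<n. \<forall>j<n. L i j = (\<lambda>_. 0))" if "sym_lift n A L" "0 < n" for L
    using that unfolding sym_lift_def by blast
  then have "(\<exists>L. sym_lift n A L \<and> (\<forall>i<n. \<forall>j<n. L i j = (\<lambda>_. 0))) \<longleftrightarrow> n = 0"
    using sym_lift_hahn_monom[OF assms] by auto
  then show ?thesis
    using sym_kapranov_rank_le_iff[OF assms, of 0] by (simp add: hahn_rank_le_0_iff)
qed

definition trop_sym_outer :: "nat \<Rightarrow> (nat \<Rightarrow> nat \<Rightarrow> real) \<Rightarrow> bool" where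
  "trop_sym_outer n A \<longleftrightarrow> (\<exists>x. \<forall>i<n. \<forall>j<n. A i j = x i + x j)"

lemma rank_one_sym_lift_iff_trop_sym_outer:
  assumes symA: "\<forall>i<n. \<forall>j<n. A i j = A j i"
  shows "(\<exists>L. sym_lift n A L \<and> hahn_rank_le n L 1) \<longleftrightarrow> trop_sym_outer n A"
proof
  assume "\<exists>L. sym_lift n A L \<and> hahn_rank_le n L 1"
  then obtain L where L: "sym_lift n A L" "hahn_rank_le n L 1"
    by blast
  moreover have "\<forall>i<n. \<forall>j<n. L i j \<noteq> (\<lambda>_. 0)"
    using L(1) by (simp add: sym_lift_def)
  ultimately obtain p q where "\<forall>i<n. \<forall>j<n. hdeg (L i j) = p i + q j"
    using hahn_rank_le_1_hdeg_additive by blast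
  then have pq: "\<forall>i<n. \<forall>j<n. A i j = p i + q j"
    using L(1) by (simp add: sym_lift_def)
  have "A i j = (p i + q i) / 2 + (p j + q j) / 2" if "i < n" "j < n" for i j
  proof -
    have "A i j = (A i j + A j i) / 2"
      using symA that by simp
    also have "\<dots> = (p i + q i) / 2 + (p j + q j) / 2"
      using pq that by (simp add: field_simps)
    finally show ?thesis .
  qed
  then show "trop_sym_outer n A"
    unfolding trop_sym_outer_def by (intro exI[of _ "\<lambda>i. (p i + q i) / 2"]) simp
next
  assume "trop_sym_outer n A"
  then obtain x where x: "\<forall>i<n. \<forall>j<n. A i j = x i + x j"
    unfolding trop_sym_outer_def by blast
  have "hahn_rank_le n (\<lambda>i j. hahn_monom (A i j)) 1"
    unfolding hahn_rank_le_def
    by (intro exI[of _ "\<lambda>i k. hahn_monom (x i)"] exI[of _ "\<lambda>k j. hahn_monom (x j)"])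
      (simp add: x hahn_hahn_monom hmul_hahn_monom)
  then show "\<exists>L. sym_lift n A L \<and> hahn_rank_le n L 1"
    using sym_lift_hahn_monom[OF symA] by blast
qed

lemma sym_kapranov_rank_eq_1_iff:
  assumes "\<forall>i<n. \<forall>j<n. A i j = A j i"
  shows "sym_kapranov_rank n A = 1 \<longleftrightarrow> 0 < n \<and> trop_sym_outer n A"
proof -
  have "sym_kapranov_rank n A = 1 \<longleftrightarrow>
      sym_kapranov_rank n A \<le> 1 \<and> sym_kapranov_rank n A \<noteq> 0"
    by arith
  then show ?thesis
    unfolding sym_kapranov_rank_le_iff[OF assms] sym_kapranov_rank_eq_0_iff[OF assms]
      rank_one_sym_lift_iff_trop_sym_outer[OF assms]
    by auto
qed

section \<open>Symmetric tropical rank\<close>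

lemma trop_value_additive:
  assumes "bij_betw \<sigma> I J" and "\<forall>i\<in>I. \<forall>j\<in>J. A i j = p i + q j"
  shows "trop_value A I \<sigma> = sum p I + sum q J"
proof -
  have "trop_value A I \<sigma> = (\<Sum>i\<in>I. p i + q (\<sigma> i))"
    unfolding trop_value_def using assms by (intro sum.cong) (auto dest: bij_betwE)
  also have "\<dots> = sum p I + (\<Sum>i\<in>I. q (\<sigma> i))"
    by (rule sum.distrib)
  also have "(\<Sum>i\<in>I. q (\<sigma> i)) = sum q J"
    using assms(1) by (rule sum.reindex_bij_betw)
  finally show ?thesis .
qed

lemma sym_monomial_comp_transpose:
  assumes "finite I" "inj_on \<rho> I" "i \<in> I" "j \<in> I" "i \<noteq> j"
  shows "sym_monomial I (\<rho> \<circ> Transposition.transpose i j) \<noteq> sym_monomial I \<rho>"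
proof
  define e :: "nat \<Rightarrow> nat \<Rightarrow> nat \<times> nat" where "e k l = (min k l, max k l)" for k l
  have e_cancel: "e k l = e k l' \<Longrightarrow> l = l'" "e k l = e k' l \<Longrightarrow> k = k'" for k k' l l'
    by (auto simp: e_def min_def max_def split: if_splits)
  let ?\<tau> = "Transposition.transpose i j" and ?R = "I - {i, j}"
  have I: "mset_set I = mset_set ?R + {#i, j#}"
  proof -
    have "mset_set I = mset_set (?R \<union> {i, j})"
      using assms(3,4) by (intro arg_cong[where f = mset_set]) auto
    also have "\<dots> = mset_set ?R + mset_set {i, j}"
      using assms(1) by (intro mset_set_Union) auto
    finally show ?thesis
      using assms(5) by simp
  qed
  have R: "image_mset (\<lambda>k. e k ((\<rho> \<circ> ?\<tau>) k)) (mset_set ?R) = image_mset (\<lambda>k. e k (\<rho> k)) (mset_set ?R)"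
    using assms(1) by (intro image_mset_cong) auto
  assume "sym_monomial I (\<rho> \<circ> ?\<tau>) = sym_monomial I \<rho>"
  then have "{#e i (\<rho> j), e j (\<rho> i)#} = {#e i (\<rho> i), e j (\<rho> j)#}"
    unfolding sym_monomial_def e_def[symmetric] I image_mset_union R by (simp add: add_mset_commute)
  then have "e i (\<rho> j) = e i (\<rho> i) \<or> e i (\<rho> j) = e j (\<rho> j)"
    by (auto simp: add_eq_conv_ex)
  moreover have "\<rho> i \<noteq> \<rho> j"
    using assms(2-5) by (auto dest: inj_onD)
  ultimately show False
    using assms(5) by (auto dest: e_cancel)
qed

lemma sym_trop_singular_additive:
  assumes "finite I" "finite J" "card I = card J" "2 \<le> card I"
    and additive: "\<forall>i\<in>I. \<forall>j\<in>J. A i j = p i + q j"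
  shows "sym_trop_singular A I J"
proof -
  obtain \<rho> where \<rho>: "bij_betw \<rho> I J"
    using finite_same_card_bij assms(1-3) by blast
  obtain K where "K \<subseteq> I" "card K = 2"
    using assms(4) obtain_subset_with_card_n by metis
  moreover obtain i j where "K = {i, j}" "i \<noteq> j"
    using \<open>card K = 2\<close> card_2_iff by metis
  ultimately have ij: "i \<in> I" "j \<in> I" "i \<noteq> j"
    by auto
  let ?\<rho>' = "\<rho> \<circ> Transposition.transpose i j"
  have "bij_betw (Transposition.transpose i j) I I"
    using ij by simp
  then have \<rho>': "bij_betw ?\<rho>' I J"
    using \<rho> by (rule bij_betw_trans)
  have "sym_monomial I \<rho> \<noteq> sym_monomial I ?\<rho>'"
    using sym_monomial_comp_transpose[OF assms(1) bij_betw_imp_inj_on[OF \<rho>] ij] by simp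
  moreover have "trop_value A I \<sigma> = sum p I + sum q J" if "bij_betw \<sigma> I J" for \<sigma>
    using that additive by (rule trop_value_additive)
  ultimately show ?thesis
    unfolding sym_trop_singular_def using \<rho> \<rho>' by (intro exI[of _ \<rho>] exI[of _ ?\<rho>']) simp
qed

lemma sym_trop_singular_doubleton:
  assumes "i \<noteq> j" "sym_trop_singular A {i, j} {i, j}"
  shows "A i i + A j j = A i j + A j i"
proof -
  obtain \<rho> \<rho>' where \<rho>: "bij_betw \<rho> {i, j} {i, j}" "bij_betw \<rho>' {i, j} {i, j}"
    and neq: "sym_monomial {i, j} \<rho> \<noteq> sym_monomial {i, j} \<rho>'"
    and eq: "trop_value A {i, j} \<rho> = trop_value A {i, j} \<rho>'"
    using assms(2) unfolding sym_trop_singular_def by blast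
  have cases: "\<sigma> i = i \<and> \<sigma> j = j \<or> \<sigma> i = j \<and> \<sigma> j = i" if "bij_betw \<sigma> {i, j} {i, j}" for \<sigma>
  proof -
    have "\<sigma> i \<in> {i, j}" "\<sigma> j \<in> {i, j}" "\<sigma> i \<noteq> \<sigma> j"
      using that assms(1) by (auto dest: bij_betwE bij_betw_imp_inj_on inj_onD)
    then show ?thesis by auto
  qed
  have "sym_monomial {i, j} \<sigma> = {#(min i (\<sigma> i), max i (\<sigma> i)), (min j (\<sigma> j), max j (\<sigma> j))#}"
    and "trop_value A {i, j} \<sigma> = A i (\<sigma> i) + A j (\<sigma> j)" for \<sigma>
    using assms(1) by (simp_all add: sym_monomial_def trop_value_def)
  with cases[OF \<rho>(1)] cases[OF \<rho>(2)] neq eq show ?thesis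
    by (auto simp: add_mset_commute)
qed

lemma not_sym_trop_singular_singleton: "\<not> sym_trop_singular A {i} {j}"
proof
  assume "sym_trop_singular A {i} {j}"
  then obtain \<rho> \<rho>' where "bij_betw \<rho> {i} {j}" "bij_betw \<rho>' {i} {j}"
    and "sym_monomial {i} \<rho> \<noteq> sym_monomial {i} \<rho>'"
    unfolding sym_trop_singular_def by blast
  then show False
    by (auto simp: sym_monomial_def dest: bij_betwE)
qed

lemma not_sym_trop_singular_empty: "\<not> sym_trop_singular A {} {}"
  unfolding sym_trop_singular_def sym_monomial_def by simp

lemma trop_sym_outer_imp_sym_trop_singular:
  assumes "trop_sym_outer n A" "I \<subseteq> {..<n}" "J \<subseteq> {..<n}" "card I = card J" "2 \<le> card I"
  shows "sym_trop_singular A I J"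
proof -
  obtain x where "\<forall>i<n. \<forall>j<n. A i j = x i + x j"
    using assms(1) unfolding trop_sym_outer_def by blast
  then have "\<forall>i\<in>I. \<forall>j\<in>J. A i j = x i + x j"
    using assms(2,3) by auto
  moreover have "finite I" "finite J"
    using assms(2,3) finite_subset by auto
  ultimately show ?thesis
    using assms(4,5) sym_trop_singular_additive[where p = x and q = x] by blast
qed

lemma all_2x2_sym_trop_singular_iff_trop_sym_outer:
  assumes symA: "\<forall>i<n. \<forall>j<n. A i j = A j i"
  shows "(\<forall>I J. I \<subseteq> {..<n} \<and> J \<subseteq> {..<n} \<and> card I = 2 \<and> card J = 2 \<longrightarrow>
      sym_trop_singular A I J) \<longleftrightarrow> trop_sym_outer n A"
proof
  assume singular: "\<forall>I J. I \<subseteq> {..<n} \<and> J \<subseteq> {..<n} \<and> card I = 2 \<and> card J = 2 \<longrightarrow>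
      sym_trop_singular A I J"
  define x where "x i = A i i / 2" for i
  have "A i j = x i + x j" if "i < n" "j < n" for i j
  proof (cases "i = j")
    case False
    then have "sym_trop_singular A {i, j} {i, j}"
      using singular[rule_format, of "{i, j}" "{i, j}"] that by simp
    then have "A i i + A j j = A i j + A j i"
      using False by (rule sym_trop_singular_doubleton[rotated])
    moreover have "A j i = A i j"
      using symA that by blast
    ultimately show ?thesis
      unfolding x_def by linarith
  qed (simp add: x_def)
  then show "trop_sym_outer n A"
    unfolding trop_sym_outer_def by blast
next
  assume outer: "trop_sym_outer n A"
  show "\<forall>I J. I \<subseteq> {..<n} \<and> J \<subseteq> {..<n} \<and> card I = 2 \<and> card J = 2 \<longrightarrow>
      sym_trop_singular A I J"
    using trop_sym_outer_imp_sym_trop_singular[OF outer] by simp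
qed

lemma sym_trop_rank_ge_iff:
  "r \<le> sym_trop_rank n A \<longleftrightarrow> (\<exists>I J. I \<subseteq> {..<n} \<and> J \<subseteq> {..<n} \<and> card I = card J \<and>
      r \<le> card I \<and> \<not> sym_trop_singular A I J)"
proof -
  define P where "P r \<longleftrightarrow> (\<exists>I J. I \<subseteq> {..<n} \<and> J \<subseteq> {..<n} \<and>
      card I = r \<and> card J = r \<and> \<not> sym_trop_singular A I J)" for r
  have rank: "sym_trop_rank n A = Greatest P"
    unfolding sym_trop_rank_def P_def ..
  have P0: "P 0"
    unfolding P_def using not_sym_trop_singular_empty by fastforce
  have bounded: "k \<le> n" if "P k" for k
    using that unfolding P_def by (metis card_lessThan card_mono finite_lessThan)
  show ?thesis
  proof
    assume r: "r \<le> sym_trop_rank n A"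
    have "P (Greatest P)"
      using P0 bounded by (rule GreatestI_nat)
    then obtain I J where "I \<subseteq> {..<n}" "J \<subseteq> {..<n}" "card I = Greatest P" "card J = Greatest P"
      "\<not> sym_trop_singular A I J"
      unfolding P_def by blast
    with r show "\<exists>I J. I \<subseteq> {..<n} \<and> J \<subseteq> {..<n} \<and> card I = card J \<and>
        r \<le> card I \<and> \<not> sym_trop_singular A I J"
      unfolding rank by (intro exI[of _ I] exI[of _ J]) simp
  next
    assume "\<exists>I J. I \<subseteq> {..<n} \<and> J \<subseteq> {..<n} \<and> card I = card J \<and>
        r \<le> card I \<and> \<not> sym_trop_singular A I J"
    then obtain k where "P k" "r \<le> k"
      unfolding P_def by metis
    then show "r \<le> sym_trop_rank n A"
      unfolding rank using Greatest_le_nat[of P k n] bounded by fastforce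
  qed
qed

lemma sym_trop_rank_eq_1_iff:
  assumes symA: "\<forall>i<n. \<forall>j<n. A i j = A j i"
  shows "sym_trop_rank n A = 1 \<longleftrightarrow> 0 < n \<and> trop_sym_outer n A"
proof -
  have "1 \<le> sym_trop_rank n A \<longleftrightarrow> 0 < n"
  proof
    assume "1 \<le> sym_trop_rank n A"
    then obtain I where "I \<subseteq> {..<n}" "1 \<le> card I"
      unfolding sym_trop_rank_ge_iff by blast
    then show "0 < n"
      by (metis card_lessThan card_mono finite_lessThan le_zero_eq not_gr0 one_neq_zero)
  next
    assume "0 < n"
    then show "1 \<le> sym_trop_rank n A"
      unfolding sym_trop_rank_ge_iff using not_sym_trop_singular_singleton
      by (intro exI[of _ "{0}"]) auto
  qed
  moreover have "2 \<le> sym_trop_rank n A \<longleftrightarrow> \<not> trop_sym_outer n A"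
  proof
    assume "2 \<le> sym_trop_rank n A"
    then show "\<not> trop_sym_outer n A"
      unfolding sym_trop_rank_ge_iff using trop_sym_outer_imp_sym_trop_singular by blast
  next
    assume "\<not> trop_sym_outer n A"
    then show "2 \<le> sym_trop_rank n A"
      unfolding sym_trop_rank_ge_iff all_2x2_sym_trop_singular_iff_trop_sym_outer[OF symA, symmetric]
      by (metis order_refl)
  qed
  ultimately show ?thesis
    by arith
qed

theorem theorem5:
  fixes n :: nat and A :: "nat \<Rightarrow> nat \<Rightarrow> real"
  assumes symA: "\<forall>i<n. \<forall>j<n. A i j = A j i"
  shows "(sym_trop_rank n A = 1 \<longleftrightarrow> sym_kapranov_rank n A = 1) \<and>
    ((\<forall>I J. I \<subseteq> {..<n} \<and> J \<subseteq> {..<n} \<and> card I = 2 \<and> card J = 2 \<longrightarrow>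
        sym_trop_singular A I J)
     \<longleftrightarrow> (\<exists>L. sym_lift n A L \<and> hahn_rank_le n L 1))"
  using sym_trop_rank_eq_1_iff[OF symA] sym_kapranov_rank_eq_1_iff[OF symA]
    all_2x2_sym_trop_singular_iff_trop_sym_outer[OF symA]
    rank_one_sym_lift_iff_trop_sym_outer[OF symA]
  by simp

end
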